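(* For every positive integer $n$, \[ \sum_{j=1}^{n}\left(\binom{n}{j}+1\right)\frac{B_j}{j}\left(1-2^{j}\right)=1 . \]
   Context: $B_j$ is the $j$th Bernoulli number ($\frac{t}{e^t-1}=\sum_{m\ge0}B_m\frac{t^m}{m!}$, so $B_1=-1/2$). *)

theory Defs
  imports Complex_Main "HOL-Computational_Algebra.Formal_Power_Series"
begin

text \<open>Bernoulli numbers via the exponential generating function
  t / (e^t - 1) = sum_m B_m t^m / m!  (so B_1 = -1/2).\<close>
definition bernoulli :: "nat \<Rightarrow> real" where
  "bernoulli m = fact m * fps_nth (fps_X / (fps_exp 1 - 1) :: real fps) m"

end

theory Submission
  imports Defs
begin

unbundle fps_syntax

text \<open>The numbers G_j = 2 (1 - 2^j) B_j are the Genocchi numbers: since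
  t/(e^t - 1) - 2t/(e^(2t) - 1) = t/(e^t + 1), their exponential generating function is
  2t/(e^t + 1). Multiplying by e^t + 1 gives the recurrence
  sum_(i<=n) C(n,i) G_i + G_n = 2 [n = 1]. As C(n+1,j) - C(n,j) = j/(n+1) C(n+1,j), the sum
  S(n) = sum_(j=1..n) (C(n,j) + 1) G_j / j grows from n to n+1 by exactly the left-hand side of
  the recurrence at n+1, divided by n+1. Hence S(n) = S(1) = 2 G_1 = 2 for all n >= 1, and S(n)
  is twice the sum in the theorem.\<close>

definition genocchi :: "nat \<Rightarrow> real" where
  "genocchi n = 2 * (1 - 2 ^ n) * bernoulli n"

lemma genocchi_0 [simp]: "genocchi 0 = 0"
  by (simp add: genocchi_def)

lemma fps_exp_minus_1_nonzero: "fps_exp (1 :: 'a :: field_char_0) - 1 \<noteq> 0"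
proof
  assume "fps_exp (1 :: 'a) - 1 = 0"
  then have "(fps_exp (1 :: 'a) - 1) $ 1 = 0" by simp
  then show False by simp
qed

lemma fps_X_div_exp_minus_1_times:
  "fps_X / (fps_exp 1 - 1) * (fps_exp 1 - 1) = (fps_X :: 'a :: field_char_0 fps)"
proof (rule fps_times_divide_eq[OF fps_exp_minus_1_nonzero])
  show "subdegree (fps_exp (1 :: 'a) - 1) \<le> subdegree (fps_X :: 'a fps)"
    by (rule subdegree_leI) simp_all
qed

lemma fps_X_div_exp_minus_1_sub_dilate:
  fixes b :: "'a :: field_char_0 fps"
  defines "b \<equiv> fps_X / (fps_exp 1 - 1)"
  shows "(b - (b oo (fps_const 2 * fps_X))) * (fps_exp 1 + 1) = fps_X"
proof -
  define E :: "'a fps" where "E = fps_exp 1"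
  have b: "b * (E - 1) = fps_X"
    unfolding b_def E_def by (rule fps_X_div_exp_minus_1_times)
  define c where "c = b oo (fps_const 2 * fps_X)"
  have c: "c * (E * E - 1) = fps_const 2 * fps_X"
  proof -
    have "c * (E * E - 1) = (b * (E - 1)) oo (fps_const 2 * fps_X)"
      by (simp add: c_def E_def fps_compose_mult_distrib fps_compose_sub_distrib
          flip: fps_exp_add_mult)
    then show ?thesis
      by (simp add: b)
  qed
  have "(b - c) * (E + 1) * (E - 1) = b * (E - 1) * (E + 1) - c * (E * E - 1)"
    by (simp add: algebra_simps)
  also have "\<dots> = fps_X * (E + 1) - fps_const 2 * fps_X"
    by (simp only: b c)
  also have "\<dots> = fps_X * (E - 1)"
    by (simp add: algebra_simps numeral_fps_const flip: fps_const_add)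
  finally show ?thesis
    using fps_exp_minus_1_nonzero by (simp add: E_def c_def)
qed

lemma genocchi_egf: "Abs_fps (\<lambda>n. genocchi n / fact n) * (fps_exp 1 + 1) = 2 * fps_X"
proof -
  define b :: "real fps" where "b = fps_X / (fps_exp 1 - 1)"
  have "genocchi n / fact n = 2 * (b $ n - 2 ^ n * b $ n)" for n
    by (simp add: genocchi_def bernoulli_def b_def field_simps)
  then have "Abs_fps (\<lambda>n. genocchi n / fact n) = 2 * (b - (b oo (fps_const 2 * fps_X)))"
    by (intro fps_ext) (simp add: numeral_fps_const)
  also have "\<dots> * (fps_exp 1 + 1) = 2 * fps_X"
    unfolding b_def mult.assoc fps_X_div_exp_minus_1_sub_dilate ..
  finally show ?thesis .
qed

lemma genocchi_recurrence:
  "(\<Sum>i\<le>n. real (n choose i) * genocchi i) + genocchi n = (if n = 1 then 2 else 0)"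
proof -
  define G where "G = Abs_fps (\<lambda>n. genocchi n / fact n)"
  have binomial_term: "G $ i * (1 / fact (n - i)) = real (n choose i) * genocchi i / fact n"
    if "i \<le> n" for i
    using that by (simp add: G_def binomial_fact field_simps)
  have "(2 * fps_X :: real fps) $ n = (G * (fps_exp 1 + 1)) $ n"
    by (simp only: G_def genocchi_egf)
  also have "\<dots> = (\<Sum>i\<le>n. G $ i * (1 / fact (n - i))) + G $ n"
    by (simp add: fps_mult_nth atLeast0AtMost distrib_left sum.distrib)
  also have "\<dots> = (\<Sum>i\<le>n. real (n choose i) * genocchi i / fact n) + genocchi n / fact n"
    using binomial_term by (intro arg_cong2[where f = "(+)"] sum.cong) (simp_all add: G_def)
  also have "\<dots> = ((\<Sum>i\<le>n. real (n choose i) * genocchi i) + genocchi n) / fact n"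
    by (simp add: add_divide_distrib sum_divide_distrib)
  finally show ?thesis
    by (cases "n = 1") (simp_all add: numeral_fps_const field_simps)
qed

lemma genocchi_1: "genocchi 1 = 1"
proof -
  have "(\<Sum>i\<le>1. real (1 choose i) * genocchi i) = genocchi 1"
    by simp
  then show ?thesis
    using genocchi_recurrence[of 1] by simp
qed

lemma sum_binomial_plus_1_weighted_Suc:
  fixes g :: "nat \<Rightarrow> 'a :: field_char_0"
  shows "(\<Sum>j=1..Suc n. (of_nat (Suc n choose j) + 1) * g j / of_nat j)
       = (\<Sum>j=1..n. (of_nat (n choose j) + 1) * g j / of_nat j)
         + ((\<Sum>j=1..Suc n. of_nat (Suc n choose j) * g j) + g (Suc n)) / of_nat (Suc n)"
proof -
  have term_split: "(of_nat (Suc n choose j) + 1) * g j / of_nat j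
      = (of_nat (n choose j) + 1) * g j / of_nat j + of_nat (Suc n choose j) * g j / of_nat (Suc n)"
    if "j \<in> {1..Suc n}" for j
  proof -
    from that obtain k where j: "j = Suc k"
      using not0_implies_Suc by force
    have pascal: "of_nat (Suc n choose j) = of_nat (n choose j) + (of_nat (n choose k) :: 'a)"
      by (simp add: j)
    have "of_nat (n choose k) * of_nat (Suc n) = (of_nat (Suc n choose j) * of_nat j :: 'a)"
      unfolding j of_nat_mult[symmetric] Suc_times_binomial_eq[symmetric] by (simp add: mult.commute)
    then have ratio: "of_nat (n choose k) / of_nat j = (of_nat (Suc n choose j) / of_nat (Suc n) :: 'a)"
      by (simp add: j frac_eq_eq del: of_nat_Suc binomial_Suc_Suc)
    have "(of_nat (Suc n choose j) + 1) * g j / of_nat j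
        = (of_nat (n choose j) + 1) * g j / of_nat j + of_nat (n choose k) / of_nat j * g j"
      unfolding pascal by (simp add: algebra_simps add_divide_distrib)
    then show ?thesis
      unfolding ratio by simp
  qed
  have "(\<Sum>j=1..Suc n. (of_nat (Suc n choose j) + 1) * g j / of_nat j)
      = (\<Sum>j=1..Suc n. (of_nat (n choose j) + 1) * g j / of_nat j)
        + (\<Sum>j=1..Suc n. of_nat (Suc n choose j) * g j) / of_nat (Suc n)"
    by (simp only: sum.cong[OF refl term_split] sum.distrib sum_divide_distrib)
  also have "(\<Sum>j=1..Suc n. (of_nat (n choose j) + 1) * g j / of_nat j)
      = (\<Sum>j=1..n. (of_nat (n choose j) + 1) * g j / of_nat j) + g (Suc n) / of_nat (Suc n)"
    by simp
  finally show ?thesis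
    by (simp only: add_divide_distrib add_ac)
qed

lemma genocchi_weighted_sum:
  assumes "n \<ge> 1"
  shows "(\<Sum>j=1..n. (real (n choose j) + 1) * genocchi j / real j) = 2"
  using assms
proof (induction n rule: dec_induct)
  case base
  show ?case using genocchi_1 by simp
next
  case (step m)
  have "(\<Sum>j=1..Suc m. real (Suc m choose j) * genocchi j) + genocchi (Suc m) = 0"
    using genocchi_recurrence[of "Suc m"] step.hyps
    by (simp add: atMost_atLeast0 sum.atLeast_Suc_atMost del: sum.cl_ivl_Suc)
  with step.IH show ?case
    by (subst sum_binomial_plus_1_weighted_Suc) simp
qed

theorem corollary2:
  fixes n :: nat
  assumes "n \<ge> 1"
  shows "(\<Sum>j=1..n. (real (n choose j) + 1) * (bernoulli j / real j) * (1 - 2 ^ j)) = 1"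
proof -
  have "(real (n choose j) + 1) * (bernoulli j / real j) * (1 - 2 ^ j)
      = (real (n choose j) + 1) * genocchi j / real j / 2" for j
    by (cases "j = 0") (simp_all add: genocchi_def field_simps)
  then have "(\<Sum>j=1..n. (real (n choose j) + 1) * (bernoulli j / real j) * (1 - 2 ^ j))
      = (\<Sum>j=1..n. (real (n choose j) + 1) * genocchi j / real j) / 2"
    by (simp only: sum_divide_distrib)
  then show ?thesis
    using genocchi_weighted_sum[OF assms] by simp
qed

end
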